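(* Let $c\geq 3$ be an integer. Then, as formal power series in $q$, $$\bar F_{c-1}(q)=\varphi(q)\prod_{i\geq 1}\varphi\big(q^{2^i}\big)^{c\cdot 2^{i-1}}.$$
   Context: For an integer $k\geq 1$ let $f_k:=\prod_{n\geq 1}(1-q^{kn})$. For an integer $c\geq1$, $\bar a_c(n)$ is defined by $\sum_{n\geq 0}\bar a_c(n)q^n=\dfrac{f_4^{c-1}}{f_1^2f_2^{2c-3}}$, and $\bar F_c(q):=\sum_{n\geq0}\bar a_c(n)q^n$. Ramanujan's $\varphi$-function is $\varphi(q):=\sum_{k=-\infty}^{\infty}q^{k^2}$. *)

theory Defs
  imports "HOL-Analysis.Analysis" "HOL-Computational_Algebra.Formal_Power_Series"
begin

text \<open>Formal power series in q over the reals; infinite products are taken in the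
  q-adic (fps metric) topology via the library's prodinf.\<close>

definition f_fps :: "nat \<Rightarrow> real fps" where
  "f_fps k = (\<Prod>n. 1 - fps_X ^ (k * Suc n))"

text \<open>bar F_c = f_4^(c-1) / (f_1^2 f_2^(2c-3)), for c >= 2 (so exponents are natural numbers)\<close>
definition barF :: "nat \<Rightarrow> real fps" where
  "barF c = f_fps 4 ^ (c - 1) * inverse (f_fps 1 ^ 2 * f_fps 2 ^ (2 * c - 3))"

text \<open>Ramanujan's phi(q) = sum_{k in Z} q^(k^2): coefficient of q^n is #{k in Z. k^2 = n}\<close>
definition phi_fps :: "real fps" where
  "phi_fps = Abs_fps (\<lambda>n. real (card {k::int. k ^ 2 = int n}))"

end

theory Submission
  imports Defs
begin

text \<open>
  Write f_k = (q^k;q^k)_oo and O = (-q;q^2)_oo. The Cauchy q-binomial theorem gives the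
  finite Jacobi triple product (-q;q^2)_M^2 = sum_{|z| <= M} [2M, M+z]_{q^2} q^(z^2), and since
  (q^2;q^2)_M [2M, M+z]_{q^2} = 1 + O(q^(2(M-|z|)+2)), letting M go to infinity yields Gauss'
  phi = f_2 O^2. Euler's identity O f_1 f_4 = f_2^2 (pair the factors of the finite products)
  turns this into the eta quotient phi f_1^2 f_4^2 = f_2^5.

  Substituting q := q^(2^(i+1)) gives phi(q^(2^(i+1))) r_(i+1)^2 = r_i for
  r_i = f_(2^(i+2)) / f_(2^(i+1))^2, so the n-th partial product of
  prod_i phi(q^(2^(i+1)))^(c 2^i) is r_0^c / r_n^(c 2^n). Since r_n = 1 + O(q^(2^(n+1))), the
  infinite product is (f_4/f_2^2)^c, and multiplying by phi = f_2^5/(f_1^2 f_4^2) gives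
  f_4^(c-2) / (f_1^2 f_2^(2c-5)), which is bar F_(c-1). All limits are q-adic; they are
  handled through congruences modulo X^m.
\<close>

section \<open>Congruences of power series modulo powers of X\<close>

definition fps_cong :: "nat \<Rightarrow> 'a fps \<Rightarrow> 'a fps \<Rightarrow> bool" where
  "fps_cong m f g \<longleftrightarrow> (\<forall>k<m. fps_nth f k = fps_nth g k)"

lemma fps_cong_refl [simp]: "fps_cong m f f"
  by (simp add: fps_cong_def)

lemma fps_cong_sym: "fps_cong m f g \<Longrightarrow> fps_cong m g f"
  by (simp add: fps_cong_def)

lemma fps_cong_trans [trans]: "fps_cong m f g \<Longrightarrow> fps_cong m g h \<Longrightarrow> fps_cong m f h"
  by (simp add: fps_cong_def)

lemma fps_cong_mono: "fps_cong m f g \<Longrightarrow> n \<le> m \<Longrightarrow> fps_cong n f g"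
  by (simp add: fps_cong_def)

lemma fps_eq_if_cong: "(\<And>m. fps_cong m f g) \<Longrightarrow> f = g"
  by (auto simp: fps_cong_def fps_eq_iff)

lemma fps_cong_add:
  "fps_cong m f g \<Longrightarrow> fps_cong m f' g' \<Longrightarrow> fps_cong m (f + f') (g + g')"
  by (simp add: fps_cong_def)

lemma fps_cong_diff:
  "fps_cong m f g \<Longrightarrow> fps_cong m f' g' \<Longrightarrow> fps_cong m (f - f') (g - g')"
  by (simp add: fps_cong_def)

lemma fps_cong_mult:
  fixes f g f' g' :: "'a::{comm_monoid_add, times} fps"
  assumes "fps_cong m f g" "fps_cong m f' g'"
  shows "fps_cong m (f * f') (g * g')"
  using assms by (auto simp: fps_cong_def fps_mult_nth intro!: sum.cong)

lemma fps_cong_power: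
  fixes f g :: "'a::comm_semiring_1 fps"
  shows "fps_cong m f g \<Longrightarrow> fps_cong m (f ^ n) (g ^ n)"
  by (induction n) (auto intro: fps_cong_mult)

lemma fps_cong_prod:
  fixes f g :: "'b \<Rightarrow> 'a::comm_semiring_1 fps"
  shows "(\<And>i. i \<in> S \<Longrightarrow> fps_cong m (f i) (g i)) \<Longrightarrow>
    fps_cong m (\<Prod>i\<in>S. f i) (\<Prod>i\<in>S. g i)"
  by (induction S rule: infinite_finite_induct) (auto intro: fps_cong_mult)

lemma fps_cong_compose: "fps_cong m f g \<Longrightarrow> fps_cong m (f oo h) (g oo h)"
  by (auto simp: fps_cong_def fps_compose_nth intro!: sum.cong)

lemma fps_cong_X_power_0:
  "m \<le> k \<Longrightarrow> fps_cong m (fps_X ^ k :: 'a::comm_semiring_1 fps) 0"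
  by (simp add: fps_cong_def)

lemma fps_cong_compose_X_power:
  fixes f :: "'a::comm_semiring_1 fps"
  assumes "fps_nth f 0 = 1"
  shows "fps_cong j (f oo fps_X ^ j) 1"
  unfolding fps_cong_def
proof (intro allI impI)
  fix k assume "k < j"
  then have "fps_nth f i * fps_nth ((fps_X ^ j) ^ i) k = (if i = 0 then fps_nth 1 k else 0)" for i
    using assms by (cases "i = 0") (auto simp: power_mult[symmetric])
  then show "fps_nth (f oo fps_X ^ j) k = fps_nth 1 k"
    by (simp add: fps_compose_nth)
qed

lemma fps_cong_mult_cancel_right:
  fixes f g h :: "'a::field fps"
  assumes "fps_cong m (f * h) (g * h)" "fps_nth h 0 \<noteq> 0"
  shows "fps_cong m f g"
proof -
  have "fps_cong m (f * h * inverse h) (g * h * inverse h)"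
    using assms(1) by (rule fps_cong_mult) simp
  then show ?thesis
    using assms(2) by (simp add: mult.assoc inverse_mult_eq_1')
qed

lemma fps_cong_inverse:
  fixes f g :: "'a::field fps"
  assumes "fps_cong m f g" "fps_nth f 0 \<noteq> 0"
  shows "fps_cong m (inverse f) (inverse g)"
proof (cases "m = 0")
  case False
  then have "fps_nth g 0 \<noteq> 0"
    using assms by (auto simp: fps_cong_def)
  have "fps_cong m (inverse f * g) (inverse f * f)"
    using fps_cong_sym[OF assms(1)] by (rule fps_cong_mult[OF fps_cong_refl])
  also have "inverse f * f = inverse g * g"
    using assms(2) \<open>fps_nth g 0 \<noteq> 0\<close> by (simp add: inverse_mult_eq_1)
  finally show ?thesis
    using \<open>fps_nth g 0 \<noteq> 0\<close> by (rule fps_cong_mult_cancel_right)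
qed (simp add: fps_cong_def)

section \<open>Infinite products of power series\<close>

lemma fps_cong_prod_lessThan:
  fixes g :: "nat \<Rightarrow> 'a::comm_semiring_1 fps"
  assumes g: "\<And>i. fps_cong (Suc i) (g i) 1" and "k \<le> n"
  shows "fps_cong (Suc k) (\<Prod>i<n. g i) (\<Prod>i<k. g i)"
proof -
  have "fps_cong (Suc k) (\<Prod>i\<in>{k..<n}. g i) (\<Prod>i\<in>{k..<n}. 1)"
    by (intro fps_cong_prod) (auto intro: fps_cong_mono[OF g])
  then have "fps_cong (Suc k) ((\<Prod>i<k. g i) * (\<Prod>i\<in>{k..<n}. g i)) ((\<Prod>i<k. g i) * 1)"
    by (intro fps_cong_mult) simp_all
  moreover have "(\<Prod>i<k. g i) * (\<Prod>i\<in>{k..<n}. g i) = (\<Prod>i<n. g i)"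
    using prod.atLeastLessThan_concat[of 0 k n g] \<open>k \<le> n\<close> by (simp add: atLeast0LessThan)
  ultimately show ?thesis
    by simp
qed

lemma prodinf_fps_cong:
  fixes g :: "nat \<Rightarrow> 'a::idom fps"
  assumes g: "\<And>i. fps_cong (Suc i) (g i) 1"
  shows "fps_cong (Suc n) (\<Prod>i. g i) (\<Prod>i<n. g i)"
proof -
  define L where "L = Abs_fps (\<lambda>k. fps_nth (\<Prod>i<k. g i) k)"
  have partial_nth: "fps_nth (\<Prod>i<n. g i) k = fps_nth L k" if "k \<le> n" for k n
    using fps_cong_prod_lessThan[OF g that] by (simp add: fps_cong_def L_def)
  have "(\<lambda>n. \<Prod>i<n. g i) \<longlonglongrightarrow> L"
    by (rule tendsto_fpsI) (use partial_nth in \<open>auto simp: eventually_sequentially\<close>)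
  moreover have "fps_nth L 0 = 1"
    by (simp add: L_def)
  then have "L \<noteq> 0"
    by auto
  ultimately have "g has_prod L"
    by (simp add: has_prod_def raw_has_prod_def LIMSEQ_lessThan_iff_atMost)
  then have "(\<Prod>i. g i) = L"
    by (rule has_prod_unique[symmetric])
  then show ?thesis
    using partial_nth by (simp add: fps_cong_def)
qed

lemma prodinf_fps_compose:
  fixes g :: "nat \<Rightarrow> 'a::idom fps"
  assumes g: "\<And>i. fps_cong (Suc i) (g i) 1" and h: "fps_nth h 0 = 0"
  shows "(\<Prod>i. g i) oo h = (\<Prod>i. g i oo h)"
proof (rule fps_eq_if_cong)
  fix m
  have gh: "fps_cong (Suc i) (g i oo h) 1" for i
    using fps_cong_compose[OF g[of i], of h] by simp
  have "fps_cong (Suc m) ((\<Prod>i. g i) oo h) ((\<Prod>i<m. g i) oo h)"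
    by (intro fps_cong_compose prodinf_fps_cong g)
  also have "(\<Prod>i<m. g i) oo h = (\<Prod>i<m. g i oo h)"
    by (rule fps_compose_prod_distrib[OF h])
  also have "fps_cong (Suc m) \<dots> (\<Prod>i. g i oo h)"
    by (rule fps_cong_sym[OF prodinf_fps_cong[OF gh]])
  finally show "fps_cong m ((\<Prod>i. g i) oo h) (\<Prod>i. g i oo h)"
    by (rule fps_cong_mono) simp
qed

lemma prodinf_fps_eqI:
  fixes g r :: "nat \<Rightarrow> 'a::idom fps"
  assumes g: "\<And>i. fps_cong (Suc i) (g i) 1"
    and r: "\<And>n. fps_cong (Suc n) (r n) 1"
    and partial: "\<And>n. (\<Prod>i<n. g i) * r n = R"
  shows "(\<Prod>i. g i) = R"
proof (rule fps_eq_if_cong)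
  fix m
  have "fps_cong (Suc m) (\<Prod>i. g i) ((\<Prod>i<m. g i) * 1)"
    using prodinf_fps_cong[OF g] by simp
  also have "fps_cong (Suc m) \<dots> ((\<Prod>i<m. g i) * r m)"
    by (intro fps_cong_mult fps_cong_refl fps_cong_sym[OF r])
  finally show "fps_cong m (\<Prod>i. g i) R"
    unfolding partial by (rule fps_cong_mono) simp
qed

section \<open>Finite q-series identities\<close>

definition q_pochhammer :: "'a::comm_ring_1 \<Rightarrow> nat \<Rightarrow> 'a" where
  "q_pochhammer q n = (\<Prod>i<n. 1 - q ^ Suc i)"

definition odd_q_pochhammer :: "'a::comm_ring_1 \<Rightarrow> nat \<Rightarrow> 'a" where
  "odd_q_pochhammer q n = (\<Prod>k<n. 1 + q ^ (2 * k + 1))"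

lemma q_pochhammer_0 [simp]: "q_pochhammer q 0 = 1"
  by (simp add: q_pochhammer_def)

lemma q_pochhammer_Suc: "q_pochhammer q (Suc n) = q_pochhammer q n * (1 - q ^ Suc n)"
  by (simp add: q_pochhammer_def)

lemma odd_q_pochhammer_Suc:
  "odd_q_pochhammer q (Suc n) = odd_q_pochhammer q n * (1 + q ^ (2 * n + 1))"
  by (simp add: odd_q_pochhammer_def)

fun qbinomial :: "'a::comm_semiring_1 \<Rightarrow> nat \<Rightarrow> nat \<Rightarrow> 'a" where
  "qbinomial q 0 j = (if j = 0 then 1 else 0)"
| "qbinomial q (Suc n) 0 = 1"
| "qbinomial q (Suc n) (Suc j) = qbinomial q n j + q ^ Suc j * qbinomial q n (Suc j)"

lemma qbinomial_0_right [simp]: "qbinomial q n 0 = 1"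
  by (cases n) simp_all

lemma qbinomial_eq_0: "n < j \<Longrightarrow> qbinomial q n j = 0"
proof (induction n arbitrary: j)
  case (Suc n)
  then show ?case
    by (cases j) simp_all
qed simp

lemma q_binomial_theorem:
  fixes q x y :: "'a::comm_semiring_1"
  shows "(\<Prod>k<n. y + x * q ^ k) =
    (\<Sum>j\<le>n. qbinomial q n j * q ^ (j choose 2) * x ^ j * y ^ (n - j))"
proof (induction n arbitrary: x)
  case (Suc n)
  have choose_Suc: "Suc j choose 2 = (j choose 2) + j" for j
    by (simp add: numeral_2_eq_2)
  define S where "S = (\<Sum>j\<le>n. qbinomial q n j * q ^ (j choose 2) * (x * q) ^ j * y ^ (n - j))"
  define h where "h j = qbinomial q n j * q ^ (Suc j choose 2) * x ^ j * y ^ (Suc n - j)" for j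
  have "(\<Prod>k<Suc n. y + x * q ^ k) = (y + x) * (\<Prod>k<n. y + (x * q) * q ^ k)"
    by (simp add: prod.lessThan_Suc_shift mult.assoc del: prod.lessThan_Suc)
  also have "\<dots> = y * S + x * S"
    by (simp add: Suc.IH S_def distrib_right)
  also have "y * S = (\<Sum>j\<le>Suc n. h j)"
  proof -
    have "y * S = (\<Sum>j\<le>n. h j)"
      unfolding S_def sum_distrib_left h_def
      by (intro sum.cong refl) (simp add: choose_Suc power_mult_distrib power_add Suc_diff_le algebra_simps)
    then show ?thesis
      by (simp add: h_def qbinomial_eq_0)
  qed
  also have "\<dots> = y ^ Suc n + (\<Sum>j\<le>n. h (Suc j))"
    by (simp only: sum.atMost_Suc_shift) (simp add: h_def binomial_eq_0)
  also have "x * S = (\<Sum>j\<le>n. qbinomial q n j * q ^ (Suc j choose 2) * x ^ Suc j * y ^ (n - j))"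
    unfolding S_def sum_distrib_left
    by (intro sum.cong refl) (simp add: choose_Suc power_mult_distrib power_add algebra_simps)
  also have "y ^ Suc n + (\<Sum>j\<le>n. h (Suc j)) + \<dots> =
      (\<Sum>j\<le>Suc n. qbinomial q (Suc n) j * q ^ (j choose 2) * x ^ j * y ^ (Suc n - j))"
    by (simp add: sum.atMost_Suc_shift h_def choose_Suc binomial_eq_0 sum.distrib[symmetric]
        power_add algebra_simps del: sum.atMost_Suc)
  finally show ?case .
qed (simp add: binomial_eq_0)

lemma qbinomial_q_pochhammer:
  fixes q :: "'a::comm_ring_1"
  assumes "j \<le> n"
  shows "qbinomial q n j * q_pochhammer q j * q_pochhammer q (n - j) = q_pochhammer q n"
  using assms
proof (induction n arbitrary: j)
  case (Suc n)
  show ?case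
  proof (cases j)
    case (Suc i)
    let ?P = "q_pochhammer q"
    have "i \<le> n"
      using Suc.prems Suc by simp
    have first: "qbinomial q n i * ?P (Suc i) * ?P (n - i) = ?P n * (1 - q ^ Suc i)"
      using Suc.IH[OF \<open>i \<le> n\<close>] by (simp add: q_pochhammer_Suc algebra_simps)
    have second: "q ^ Suc i * qbinomial q n (Suc i) * ?P (Suc i) * ?P (n - i) =
        ?P n * (q ^ Suc i - q ^ Suc n)"
    proof (cases "i = n")
      case False
      then have "Suc i \<le> n" "n - i = Suc (n - Suc i)"
        using \<open>i \<le> n\<close> by auto
      then have "?P (n - i) = ?P (n - Suc i) * (1 - q ^ (n - i))"
        by (simp add: q_pochhammer_Suc)
      then have "q ^ Suc i * qbinomial q n (Suc i) * ?P (Suc i) * ?P (n - i)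
          = q ^ Suc i * (qbinomial q n (Suc i) * ?P (Suc i) * ?P (n - Suc i)) * (1 - q ^ (n - i))"
        by (simp only: ac_simps)
      also have "\<dots> = ?P n * q ^ Suc i - ?P n * (q ^ Suc i * q ^ (n - i))"
        using Suc.IH[OF \<open>Suc i \<le> n\<close>] by (simp only: algebra_simps mult_1_left)
      also have "q ^ Suc i * q ^ (n - i) = q ^ Suc n"
        using \<open>i \<le> n\<close> by (metis power_add add_Suc le_add_diff_inverse)
      finally show ?thesis
        by (simp only: right_diff_distrib)
    qed (simp add: qbinomial_eq_0)
    have "qbinomial q (Suc n) j * ?P j * ?P (Suc n - j)
        = qbinomial q n i * ?P (Suc i) * ?P (n - i) +
          q ^ Suc i * qbinomial q n (Suc i) * ?P (Suc i) * ?P (n - i)"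
      using Suc by (simp add: algebra_simps)
    also have "\<dots> = ?P (Suc n)"
      unfolding first second by (simp add: q_pochhammer_Suc algebra_simps)
    finally show ?thesis .
  qed simp
qed simp

lemma odd_q_pochhammer_euler:
  fixes q :: "'a::comm_ring_1"
  shows "odd_q_pochhammer q n * q_pochhammer q (2 * n) * q_pochhammer (q ^ 4) n =
    q_pochhammer (q ^ 2) (2 * n) * q_pochhammer (q ^ 2) n"
proof (induction n)
  case (Suc n)
  have double_Suc: "2 * Suc n = Suc (Suc (2 * n))"
    by simp
  have square: "(1 + q ^ (2 * n + 1)) * (1 - q ^ (2 * n + 1)) = 1 - (q ^ 2) ^ (2 * n + 1)"
    by (simp add: algebra_simps flip: power_mult power_add mult_2)
  have "2 * n + 2 = 2 * Suc n" "4 * Suc n = 2 * (2 * n + 2)"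
    by simp_all
  then have powers: "q ^ (2 * n + 2) = (q ^ 2) ^ Suc n" "(q ^ 4) ^ Suc n = (q ^ 2) ^ (2 * n + 2)"
    by (simp_all only: power_mult[symmetric])
  have "odd_q_pochhammer q (Suc n) * q_pochhammer q (2 * Suc n) * q_pochhammer (q ^ 4) (Suc n) =
      (odd_q_pochhammer q n * q_pochhammer q (2 * n) * q_pochhammer (q ^ 4) n) *
      ((1 + q ^ (2 * n + 1)) * (1 - q ^ (2 * n + 1))) * (1 - q ^ (2 * n + 2)) * (1 - (q ^ 4) ^ Suc n)"
    unfolding double_Suc(1) by (simp add: odd_q_pochhammer_Suc q_pochhammer_Suc ac_simps)
  also have "\<dots> = (q_pochhammer (q ^ 2) (2 * n) * q_pochhammer (q ^ 2) n) *
      (1 - (q ^ 2) ^ (2 * n + 1)) * (1 - (q ^ 2) ^ Suc n) * (1 - (q ^ 2) ^ (2 * n + 2))"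
    by (simp only: Suc.IH square powers)
  also have "\<dots> = q_pochhammer (q ^ 2) (2 * Suc n) * q_pochhammer (q ^ 2) (Suc n)"
    unfolding double_Suc(1) by (simp add: q_pochhammer_Suc ac_simps)
  finally show ?case .
qed (simp add: odd_q_pochhammer_def)

lemma int_abs_le_square: "\<bar>z\<bar> \<le> (z::int) ^ 2"
proof (cases "z = 0")
  case False
  then have "\<bar>z\<bar> * 1 \<le> \<bar>z\<bar> * \<bar>z\<bar>"
    by (intro mult_left_mono) auto
  then show ?thesis
    by (simp add: power2_eq_square abs_mult[symmetric])
qed simp

lemma int_double_choose_two: "int (2 * (n choose 2)) = int n * (int n - 1)"
  by (cases n) (simp_all add: choose_two dvd_mult_div_cancel algebra_simps)

lemma sum_lessThan_eq_choose_two: "(\<Sum>k<n. k) = n choose 2"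
  by (simp add: choose_two Sum_Ico_nat flip: atLeast0LessThan)

lemma jacobi_exponent:
  assumes "0 < M" "j \<le> 2 * M"
  shows "2 * (j choose 2) + (2 * M - 1) * (2 * M - j) =
    2 * (M choose 2) + (2 * M - 1) * M + nat ((int j - int M) ^ 2)"
proof -
  have "int ((2 * M - 1) * (2 * M - j)) = (2 * int M - 1) * (2 * int M - int j)"
    "int ((2 * M - 1) * M) = (2 * int M - 1) * int M"
    using assms by (simp_all add: of_nat_diff)
  then have "int (2 * (j choose 2)) + int ((2 * M - 1) * (2 * M - j)) =
      int (2 * (M choose 2)) + int ((2 * M - 1) * M) + (int j - int M) ^ 2"
    unfolding int_double_choose_two by (simp add: algebra_simps power2_eq_square)
  then have "int (2 * (j choose 2) + (2 * M - 1) * (2 * M - j)) =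
      int (2 * (M choose 2) + (2 * M - 1) * M + nat ((int j - int M) ^ 2))"
    by (simp only: of_nat_add int_nat_eq) simp
  then show ?thesis
    by (simp only: of_nat_eq_iff)
qed

lemma prod_shifted_even_powers:
  fixes q :: "'a::comm_ring_1"
  assumes "0 < M"
  shows "(\<Prod>k<2 * M. q ^ (2 * M - 1) + (q ^ 2) ^ k) =
    q ^ (2 * (M choose 2) + (2 * M - 1) * M) * odd_q_pochhammer q M ^ 2"
proof -
  let ?f = "\<lambda>k. q ^ (2 * M - 1) + (q ^ 2) ^ k"
  have "(\<Prod>k<M. ?f k) = (\<Prod>k<M. (q ^ 2) ^ k * (1 + q ^ (2 * (M - Suc k) + 1)))"
  proof (rule prod.cong)
    fix k assume "k \<in> {..<M}"
    then have "2 * M - 1 = 2 * k + (2 * (M - Suc k) + 1)"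
      by simp
    then show "?f k = (q ^ 2) ^ k * (1 + q ^ (2 * (M - Suc k) + 1))"
      by (simp add: power_add power_mult distrib_left)
  qed simp
  also have "\<dots> = (\<Prod>k<M. (q ^ 2) ^ k) * (\<Prod>k<M. 1 + q ^ (2 * (M - Suc k) + 1))"
    by (rule prod.distrib)
  also have "(\<Prod>k<M. 1 + q ^ (2 * (M - Suc k) + 1)) = odd_q_pochhammer q M"
    unfolding odd_q_pochhammer_def using prod.nat_diff_reindex[of "\<lambda>k. 1 + q ^ (2 * k + 1)" M]
    by simp
  also have "(\<Prod>k<M. (q ^ 2) ^ k) = (q ^ 2) ^ (M choose 2)"
    by (simp add: power_sum[symmetric] sum_lessThan_eq_choose_two)
  finally have low: "(\<Prod>k<M. ?f k) = (q ^ 2) ^ (M choose 2) * odd_q_pochhammer q M" .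
  have "(\<Prod>k<M. ?f (M + k)) = (\<Prod>k<M. q ^ (2 * M - 1) * (1 + q ^ (2 * k + 1)))"
  proof (rule prod.cong)
    fix k
    have "2 * (M + k) = (2 * M - 1) + (2 * k + 1)"
      using assms by simp
    then have "(q ^ 2) ^ (M + k) = q ^ (2 * M - 1) * q ^ (2 * k + 1)"
      by (metis power_add power_mult)
    then show "?f (M + k) = q ^ (2 * M - 1) * (1 + q ^ (2 * k + 1))"
      by (simp only: distrib_left mult_1_right)
  qed simp
  also have "\<dots> = q ^ ((2 * M - 1) * M) * odd_q_pochhammer q M"
    by (simp add: prod.distrib odd_q_pochhammer_def power_mult)
  finally have high: "(\<Prod>k<M. ?f (M + k)) = q ^ ((2 * M - 1) * M) * odd_q_pochhammer q M" .
  have "(\<Prod>k<2 * M. ?f k) = (\<Prod>k<M. ?f k) * (\<Prod>k<M. ?f (M + k))"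
    using prod.atLeastLessThan_concat[of 0 M "2 * M" ?f] prod.atLeastLessThan_shift_bounds[of ?f 0 M M]
    by (simp add: atLeast0LessThan mult_2 comp_def add.commute)
  also have "\<dots> = q ^ (2 * (M choose 2) + (2 * M - 1) * M) * odd_q_pochhammer q M ^ 2"
    unfolding low high by (simp add: power_add power_mult power2_eq_square ac_simps)
  finally show ?thesis .
qed

lemma odd_q_pochhammer_X_square:
  assumes "0 < M"
  shows "odd_q_pochhammer (fps_X :: 'a::idom fps) M ^ 2 =
    (\<Sum>z\<in>{-int M..int M}. qbinomial (fps_X ^ 2) (2 * M) (nat (int M + z)) * fps_X ^ nat (z ^ 2))"
proof -
  let ?E = "2 * (M choose 2) + (2 * M - 1) * M"
  let ?B = "qbinomial (fps_X ^ 2 :: 'a fps) (2 * M)"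
  have summand: "?B j * (fps_X ^ 2) ^ (j choose 2) * 1 ^ j * (fps_X ^ (2 * M - 1)) ^ (2 * M - j) =
      fps_X ^ ?E * (?B j * fps_X ^ nat ((int j - int M) ^ 2))" if "j \<le> 2 * M" for j
  proof -
    have "(fps_X ^ 2) ^ (j choose 2) * (fps_X ^ (2 * M - 1)) ^ (2 * M - j) =
        (fps_X ^ (2 * (j choose 2) + (2 * M - 1) * (2 * M - j)) :: 'a fps)"
      by (simp only: power_add power_mult)
    also have "\<dots> = fps_X ^ ?E * fps_X ^ nat ((int j - int M) ^ 2)"
      by (simp only: jacobi_exponent[OF assms that] power_add)
    finally show ?thesis
      by (simp add: ac_simps)
  qed
  have "fps_X ^ ?E * odd_q_pochhammer fps_X M ^ 2 =
      (\<Prod>k<2 * M. fps_X ^ (2 * M - 1) + 1 * (fps_X ^ 2) ^ k :: 'a fps)"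
    by (simp only: mult_1_left prod_shifted_even_powers[OF assms])
  also have "\<dots> = (\<Sum>j\<le>2 * M.
      ?B j * (fps_X ^ 2) ^ (j choose 2) * 1 ^ j * (fps_X ^ (2 * M - 1)) ^ (2 * M - j))"
    by (rule q_binomial_theorem)
  also have "\<dots> = (\<Sum>j\<le>2 * M. fps_X ^ ?E * (?B j * fps_X ^ nat ((int j - int M) ^ 2)))"
    by (intro sum.cong refl summand) simp
  also have "\<dots> = fps_X ^ ?E * (\<Sum>j\<le>2 * M. ?B j * fps_X ^ nat ((int j - int M) ^ 2))"
    by (simp only: sum_distrib_left)
  also have "(\<Sum>j\<le>2 * M. ?B j * fps_X ^ nat ((int j - int M) ^ 2)) =
      (\<Sum>z\<in>{-int M..int M}. ?B (nat (int M + z)) * fps_X ^ nat (z ^ 2))"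
    by (rule sum.reindex_bij_witness[where i = "\<lambda>z. nat (int M + z)" and j = "\<lambda>j. int j - int M"])
      auto
  finally show ?thesis
    by simp
qed

lemma q_pochhammer_X_power_cong:
  assumes "r \<le> n"
  shows "fps_cong (d * Suc r)
    (q_pochhammer (fps_X ^ d :: 'a::comm_ring_1 fps) n) (q_pochhammer (fps_X ^ d) r)"
  using assms
proof (induction n rule: dec_induct)
  case (step n)
  have "fps_cong (d * Suc r) (1 - (fps_X ^ d) ^ Suc n :: 'a fps) (1 - 0)"
    unfolding power_mult[symmetric] using step.hyps
    by (intro fps_cong_diff fps_cong_refl fps_cong_X_power_0) simp
  from fps_cong_mult[OF step.IH this] show ?case
    by (simp add: q_pochhammer_Suc)
qed simp

lemma q_pochhammer_X_power_nth_0: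
  "0 < d \<Longrightarrow> fps_nth (q_pochhammer (fps_X ^ d :: 'a::comm_ring_1 fps) n) 0 = 1"
  using q_pochhammer_X_power_cong[of 0 n d] by (force simp: fps_cong_def)

lemma qbinomial_q_pochhammer_cong:
  assumes "0 < d" "j \<le> n" "r \<le> j" "r \<le> n - j" "r \<le> m"
  shows "fps_cong (d * Suc r)
    (qbinomial (fps_X ^ d) n j * q_pochhammer (fps_X ^ d) m :: 'a::field fps) 1"
proof -
  let ?B = "qbinomial (fps_X ^ d :: 'a fps) n j"
  let ?P = "q_pochhammer (fps_X ^ d :: 'a fps)"
  have P: "fps_cong (d * Suc r) (?P l) (?P r)" if "r \<le> l" for l
    using that by (rule q_pochhammer_X_power_cong)
  have "fps_cong (d * Suc r) (?B * ?P m * ?P m) (?B * ?P r * ?P r)"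
    using P assms(5) by (intro fps_cong_mult fps_cong_refl)
  also have "fps_cong (d * Suc r) \<dots> (?B * ?P j * ?P (n - j))"
    using assms(3,4) by (intro fps_cong_mult fps_cong_refl fps_cong_sym[OF P])
  also have "?B * ?P j * ?P (n - j) = ?P n"
    using assms(2) by (rule qbinomial_q_pochhammer)
  also have "fps_cong (d * Suc r) \<dots> (1 * ?P m)"
    using fps_cong_trans[OF P[of n] fps_cong_sym[OF P[of m]]] assms by simp
  finally show ?thesis
    by (rule fps_cong_mult_cancel_right) (simp add: q_pochhammer_X_power_nth_0 assms(1))
qed

lemma q_pochhammer_odd_square_nth:
  assumes "0 < M" "k \<le> M"
  shows "fps_nth (q_pochhammer (fps_X ^ 2) M * odd_q_pochhammer fps_X M ^ 2 :: 'a::field fps) k =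
    of_nat (card {z::int. z ^ 2 = int k})"
proof -
  let ?B = "\<lambda>z. qbinomial (fps_X ^ 2 :: 'a fps) (2 * M) (nat (int M + z))"
  let ?P = "q_pochhammer (fps_X ^ 2 :: 'a fps) M"
  have summand: "fps_nth (?B z * ?P * fps_X ^ nat (z ^ 2)) k = (if z ^ 2 = int k then 1 else 0)"
    if "z \<in> {-int M..int M}" for z
  proof (cases "nat (z ^ 2) \<le> k")
    case True
    have "fps_cong (2 * Suc (M - nat \<bar>z\<bar>)) (?B z * ?P) 1"
      using that by (intro qbinomial_q_pochhammer_cong) auto
    moreover have "k - nat (z ^ 2) < 2 * Suc (M - nat \<bar>z\<bar>)"
      using int_abs_le_square[of z] that assms(2) by auto
    ultimately show ?thesis
      using True by (auto simp: fps_cong_def fps_X_power_mult_right_nth)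
  qed (auto simp: fps_X_power_mult_right_nth)
  have "?P * odd_q_pochhammer fps_X M ^ 2 = (\<Sum>z\<in>{-int M..int M}. ?B z * ?P * fps_X ^ nat (z ^ 2))"
    by (simp add: odd_q_pochhammer_X_square[OF assms(1)] sum_distrib_left ac_simps)
  then have "fps_nth (?P * odd_q_pochhammer fps_X M ^ 2) k =
      of_nat (card ({-int M..int M} \<inter> {z. z ^ 2 = int k}))"
    by (simp add: fps_sum_nth summand sum.If_cases)
  also have "{-int M..int M} \<inter> {z. z ^ 2 = int k} = {z. z ^ 2 = int k}"
  proof -
    have "z \<in> {-int M..int M}" if "z ^ 2 = int k" for z
    proof -
      have "\<bar>z\<bar> \<le> int M"
        using int_abs_le_square[of z] that assms(2) by linarith
      then show ?thesis
        by (simp add: abs_le_iff)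
    qed
    then show ?thesis
      by blast
  qed
  finally show ?thesis .
qed

section \<open>The eta quotient of phi\<close>

definition odd_q_pochhammer_inf :: "real fps" where
  "odd_q_pochhammer_inf = (\<Prod>k. 1 + fps_X ^ (2 * k + 1))"

lemma fps_cong_one_minus_X_power:
  assumes "0 < k"
  shows "fps_cong (Suc i) (1 - fps_X ^ (k * Suc i) :: 'a::comm_ring_1 fps) 1"
proof -
  have "Suc i \<le> k * Suc i"
    using mult_le_mono1[of 1 k "Suc i"] assms by simp
  then have "fps_cong (Suc i) (1 - fps_X ^ (k * Suc i) :: 'a fps) (1 - 0)"
    by (intro fps_cong_diff fps_cong_refl fps_cong_X_power_0)
  then show ?thesis
    by simp
qed

lemma f_fps_cong:
  assumes "0 < k"
  shows "fps_cong (Suc n) (f_fps k) (q_pochhammer (fps_X ^ k) n)"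
  unfolding f_fps_def q_pochhammer_def power_mult[symmetric]
  by (rule prodinf_fps_cong) (rule fps_cong_one_minus_X_power[OF assms])

lemma f_fps_nth_0: "0 < k \<Longrightarrow> fps_nth (f_fps k) 0 = 1"
  using f_fps_cong[of k 0] by (simp add: fps_cong_def)

lemma odd_q_pochhammer_inf_cong:
  "fps_cong (Suc n) odd_q_pochhammer_inf (odd_q_pochhammer fps_X n)"
  unfolding odd_q_pochhammer_inf_def odd_q_pochhammer_def
proof (rule prodinf_fps_cong)
  fix i
  show "fps_cong (Suc i) (1 + fps_X ^ (2 * i + 1)) (1 :: real fps)"
    using fps_cong_add[OF fps_cong_refl fps_cong_X_power_0[of "Suc i" "2 * i + 1"]] by simp
qed

lemma phi_fps_nth_0: "fps_nth phi_fps 0 = 1"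
  by (simp add: phi_fps_def)

lemma phi_fps_eq_f_fps_odd_square: "phi_fps = f_fps 2 * odd_q_pochhammer_inf ^ 2"
proof (rule fps_ext)
  fix k
  have "fps_cong (Suc (Suc k)) (f_fps 2 * odd_q_pochhammer_inf ^ 2)
      (q_pochhammer (fps_X ^ 2) (Suc k) * odd_q_pochhammer fps_X (Suc k) ^ 2)"
    by (intro fps_cong_mult fps_cong_power f_fps_cong odd_q_pochhammer_inf_cong) simp
  then have "fps_nth (f_fps 2 * odd_q_pochhammer_inf ^ 2) k =
      fps_nth (q_pochhammer (fps_X ^ 2) (Suc k) * odd_q_pochhammer fps_X (Suc k) ^ 2) k"
    by (simp add: fps_cong_def)
  also have "\<dots> = of_nat (card {z::int. z ^ 2 = int k})"
    by (rule q_pochhammer_odd_square_nth) simp_all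
  finally show "fps_nth phi_fps k = fps_nth (f_fps 2 * odd_q_pochhammer_inf ^ 2) k"
    by (simp add: phi_fps_def)
qed

lemma odd_q_pochhammer_inf_euler: "odd_q_pochhammer_inf * f_fps 1 * f_fps 4 = f_fps 2 ^ 2"
proof (rule fps_eq_if_cong)
  fix m
  have f1: "fps_cong (Suc m) (f_fps 1) (q_pochhammer fps_X (2 * m))"
    using fps_cong_mono[OF f_fps_cong[of 1 "2 * m"]] by simp
  have f2: "fps_cong (Suc m) (f_fps 2) (q_pochhammer (fps_X ^ 2) (2 * m))"
    using fps_cong_mono[OF f_fps_cong[of 2 "2 * m"]] by simp
  have "fps_cong (Suc m) (odd_q_pochhammer_inf * f_fps 1 * f_fps 4)
      (odd_q_pochhammer fps_X m * q_pochhammer fps_X (2 * m) * q_pochhammer (fps_X ^ 4) m)"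
    by (intro fps_cong_mult f1 odd_q_pochhammer_inf_cong f_fps_cong) simp
  also have "\<dots> = q_pochhammer (fps_X ^ 2) (2 * m) * q_pochhammer (fps_X ^ 2) m"
    by (rule odd_q_pochhammer_euler)
  also have "fps_cong (Suc m) \<dots> (f_fps 2 ^ 2)"
    using fps_cong_mult[OF fps_cong_sym[OF f2] fps_cong_sym[OF f_fps_cong[of 2 m]]]
    by (simp add: power2_eq_square)
  finally show "fps_cong m (odd_q_pochhammer_inf * f_fps 1 * f_fps 4) (f_fps 2 ^ 2)"
    by (rule fps_cong_mono) simp
qed

lemma phi_fps_eta_quotient: "phi_fps * f_fps 1 ^ 2 * f_fps 4 ^ 2 = f_fps 2 ^ 5"
proof -
  have "phi_fps * f_fps 1 ^ 2 * f_fps 4 ^ 2 = f_fps 2 * (odd_q_pochhammer_inf * f_fps 1 * f_fps 4) ^ 2"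
    by (simp add: phi_fps_eq_f_fps_odd_square power_mult_distrib ac_simps)
  also have "\<dots> = f_fps 2 ^ 5"
    by (simp only: odd_q_pochhammer_inf_euler power_mult[symmetric] power_Suc[symmetric]) simp
  finally show ?thesis .
qed

lemma fps_X_power_compose_X_power:
  "0 < j \<Longrightarrow> fps_X ^ a oo fps_X ^ j = (fps_X ^ (a * j) :: 'a::idom fps)"
  by (simp add: fps_compose_power[symmetric] power_mult[symmetric] mult.commute)

lemma f_fps_compose_X_power:
  assumes "0 < k" "0 < j"
  shows "f_fps k oo fps_X ^ j = f_fps (k * j)"
proof -
  have "f_fps k oo fps_X ^ j = (\<Prod>i. (1 - fps_X ^ (k * Suc i)) oo fps_X ^ j)"
    unfolding f_fps_def using assms by (intro prodinf_fps_compose fps_cong_one_minus_X_power) simp_all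
  also have "\<dots> = f_fps (k * j)"
    unfolding f_fps_def using assms(2)
    by (simp add: fps_compose_sub_distrib fps_X_power_compose_X_power ac_simps)
  finally show ?thesis .
qed

lemma f_fps_cong_one: "0 < k \<Longrightarrow> fps_cong k (f_fps k) 1"
  using fps_cong_compose_X_power[of "f_fps 1" k] by (simp add: f_fps_nth_0 f_fps_compose_X_power)

lemma phi_fps_compose_eta_quotient:
  assumes "0 < m"
  shows "(phi_fps oo fps_X ^ m) * f_fps m ^ 2 * f_fps (4 * m) ^ 2 = f_fps (2 * m) ^ 5"
proof -
  have X0: "fps_nth (fps_X ^ m :: real fps) 0 = 0"
    using assms by simp
  have "(phi_fps * f_fps 1 ^ 2 * f_fps 4 ^ 2) oo fps_X ^ m = f_fps 2 ^ 5 oo fps_X ^ m"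
    by (simp only: phi_fps_eta_quotient)
  then show ?thesis
    using assms by (simp add: fps_compose_mult_distrib[OF X0] fps_compose_power[OF X0, symmetric]
        f_fps_compose_X_power)
qed

section \<open>The dyadic product\<close>

lemma eta_quotient_step:
  fixes p a b c a' b' :: "'a::comm_monoid_mult"
  assumes "a * a' = 1" "b * b' = 1" "p * a ^ 2 * c ^ 2 = b ^ 5"
  shows "p * (c * b' ^ 2) ^ 2 = b * a' ^ 2"
proof -
  have "p * (c * b' ^ 2) ^ 2 = p * (c * b' ^ 2) ^ 2 * (a * a') ^ 2"
    using assms(1) by simp
  also have "\<dots> = (p * a ^ 2 * c ^ 2) * a' ^ 2 * b' ^ 4"
    by (simp add: power_mult_distrib ac_simps flip: power_mult)
  also have "\<dots> = b * a' ^ 2 * (b * b') ^ 4"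
    unfolding assms(3) by (simp add: power_mult_distrib eval_nat_numeral ac_simps)
  also have "\<dots> = b * a' ^ 2"
    using assms(2) by simp
  finally show ?thesis .
qed

lemma prod_telescoping_squares:
  fixes p r :: "nat \<Rightarrow> 'a::comm_monoid_mult"
  assumes "\<And>i. p i * r (Suc i) ^ 2 = r i"
  shows "(\<Prod>i<n. p i ^ (c * 2 ^ i)) * r n ^ (c * 2 ^ n) = r 0 ^ c"
proof (induction n)
  case (Suc n)
  have "p n ^ (c * 2 ^ n) * r (Suc n) ^ (c * 2 ^ Suc n) = (p n * r (Suc n) ^ 2) ^ (c * 2 ^ n)"
    by (simp add: power_mult_distrib ac_simps flip: power_mult)
  then show ?case
    using Suc.IH by (simp add: assms mult.assoc)
qed simp

lemma dyadic_phi_product: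
  "(\<Prod>i. (phi_fps oo fps_X ^ (2 ^ Suc i)) ^ (c * 2 ^ i)) = (f_fps 4 * inverse (f_fps 2) ^ 2) ^ c"
proof -
  define u where "u i = f_fps (2 ^ Suc i)" for i
  define r where "r i = u (Suc i) * inverse (u i) ^ 2" for i
  have unit: "u i * inverse (u i) = 1" for i
    by (simp add: u_def inverse_mult_eq_1' f_fps_nth_0)
  have step: "(phi_fps oo fps_X ^ (2 ^ Suc i)) * r (Suc i) ^ 2 = r i" for i
    unfolding r_def
  proof (rule eta_quotient_step[OF unit unit])
    show "(phi_fps oo fps_X ^ (2 ^ Suc i)) * u i ^ 2 * u (Suc (Suc i)) ^ 2 = u (Suc i) ^ 5"
      using phi_fps_compose_eta_quotient[of "2 ^ Suc i"] by (simp add: u_def)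
  qed
  have Suc_le: "Suc n \<le> 2 ^ Suc n" for n :: nat
    using less_exp[of "Suc n"] by simp
  have r_cong: "fps_cong (Suc n) (r n ^ (c * 2 ^ n)) 1" for n
  proof -
    have "fps_cong (2 ^ Suc n) (u (Suc n)) 1"
      using fps_cong_mono[OF f_fps_cong_one[of "2 ^ Suc (Suc n)"]] by (simp add: u_def)
    moreover have "fps_cong (2 ^ Suc n) (inverse (u n)) (inverse 1)"
      using f_fps_cong_one[of "2 ^ Suc n"] by (intro fps_cong_inverse) (simp_all add: u_def f_fps_nth_0)
    ultimately have "fps_cong (2 ^ Suc n) (r n ^ (c * 2 ^ n)) ((1 * inverse 1 ^ 2) ^ (c * 2 ^ n))"
      unfolding r_def by (intro fps_cong_power fps_cong_mult)
    then have "fps_cong (2 ^ Suc n) (r n ^ (c * 2 ^ n)) 1"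
      by simp
    then show ?thesis
      using Suc_le by (rule fps_cong_mono)
  qed
  have phi_cong: "fps_cong (Suc i) ((phi_fps oo fps_X ^ (2 ^ Suc i)) ^ (c * 2 ^ i)) 1" for i
  proof -
    have "fps_cong (2 ^ Suc i) ((phi_fps oo fps_X ^ (2 ^ Suc i)) ^ (c * 2 ^ i)) (1 ^ (c * 2 ^ i))"
      by (intro fps_cong_power fps_cong_compose_X_power phi_fps_nth_0)
    then have "fps_cong (2 ^ Suc i) ((phi_fps oo fps_X ^ (2 ^ Suc i)) ^ (c * 2 ^ i)) 1"
      by simp
    then show ?thesis
      using Suc_le by (rule fps_cong_mono)
  qed
  have "(\<Prod>i. (phi_fps oo fps_X ^ (2 ^ Suc i)) ^ (c * 2 ^ i)) = r 0 ^ c"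
    using prod_telescoping_squares[where p = "\<lambda>i. phi_fps oo fps_X ^ (2 ^ Suc i)", OF step]
    by (rule prodinf_fps_eqI[OF phi_cong r_cong])
  then show ?thesis
    by (simp add: r_def u_def)
qed

lemma barF_eq_phi_times_eta_quotient_power:
  "barF (m + 2) = phi_fps * (f_fps 4 * inverse (f_fps 2) ^ 2) ^ (m + 3)"
proof -
  have unit: "f_fps 1 * inverse (f_fps 1) = 1" "f_fps 2 * inverse (f_fps 2) = 1"
    by (simp_all add: inverse_mult_eq_1' f_fps_nth_0)
  have "m + 3 = 2 + (m + 1)"
    by simp
  then have "phi_fps * (f_fps 4 * inverse (f_fps 2) ^ 2) ^ (m + 3) =
      phi_fps * (f_fps 4 * inverse (f_fps 2) ^ 2) ^ 2 * (f_fps 4 * inverse (f_fps 2) ^ 2) ^ (m + 1)"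
    by (simp only: power_add mult.assoc)
  also have "\<dots> = f_fps 2 * inverse (f_fps 1) ^ 2 * (f_fps 4 * inverse (f_fps 2) ^ 2) ^ (m + 1)"
    by (simp only: eta_quotient_step[OF unit phi_fps_eta_quotient])
  also have "\<dots> = (f_fps 2 * inverse (f_fps 2)) *
      (f_fps 4 ^ (m + 1) * (inverse (f_fps 1) ^ 2 * inverse (f_fps 2) ^ (2 * m + 1)))"
  proof -
    have "2 * (m + 1) = Suc (2 * m + 1)"
      by simp
    then have "(f_fps 4 * inverse (f_fps 2) ^ 2) ^ (m + 1) =
        f_fps 4 ^ (m + 1) * (inverse (f_fps 2) * inverse (f_fps 2) ^ (2 * m + 1))"
      by (simp only: power_mult_distrib power_mult[symmetric] power_Suc)
    then show ?thesis
      by (simp only: ac_simps)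
  qed
  also have "\<dots> = barF (m + 2)"
    by (simp add: unit barF_def fps_inverse_mult fps_inverse_power)
  finally show ?thesis ..
qed

theorem lemma4p1:
  fixes c :: nat
  assumes "c \<ge> 3"
  shows "barF (c - 1) =
    phi_fps * (\<Prod>i. (fps_compose phi_fps (fps_X ^ (2 ^ Suc i))) ^ (c * 2 ^ i))"
proof -
  obtain m where c: "c = m + 3"
    using assms by (metis add.commute le_iff_add)
  then have "barF (c - 1) = phi_fps * (f_fps 4 * inverse (f_fps 2) ^ 2) ^ c"
    using barF_eq_phi_times_eta_quotient_power[of m] by simp
  then show ?thesis
    by (simp only: dyadic_phi_product)
qed

end
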